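(* Every cancellative monoid that is left-amenable or right-amenable is sofic.
   Context: A monoid $M$ is cancellative if $st=st'$ implies $t=t'$ and $ts=t's$ implies $t=t'$. $M$ is left-amenable (resp. right-amenable) if there is a mean on $\ell^\infty(M)$ (a positive linear functional of norm one taking value $1$ on the constant function $1$) invariant under all left translations (resp. all right translations) by elements of $M$. For a non-empty finite set $X$, $\mathrm{Map}(X)$ is the monoid of all maps $X\to X$ under composition (identity $\mathrm{Id}_X$) with the Hamming metric $d_X(f,g)=|\{x\in X : f(x)\ne g(x)\}|/|X|$. For finite $K\subset M$ and $\varepsilon,\alpha>0$, a map $\varphi\colon M\to\mathrm{Map}(X)$ is a $(K,\varepsilon)$-morphism if $d_X(\varphi(k_1k_2),\varphi(k_1)\varphi(k_2))\le\varepsilon$ for all $k_1,k_2\in K$ and $d_X(\varphi(1_M),\mathrm{Id}_X)\le\varepsilon$; it is $(K,\alpha)$-injective if $d_X(\varphi(k_1),\varphi(k_2))\ge\alpha$ for all distinct $k_1,k_2\in K$. $M$ is sofic if for every finite $K\subset M$ and every $\varepsilon>0$ there exist a non-empty finite set $X$ and a $(K,1-\varepsilon)$-injective $(K,\varepsilon)$-morphism $\varphi\colon M\to\mathrm{Map}(X)$. *)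

theory Defs
  imports Complex_Main
begin

definition cancellative :: "'a::monoid_mult itself \<Rightarrow> bool" where
  "cancellative _ \<longleftrightarrow>
     (\<forall>s t t'::'a. s * t = s * t' \<longrightarrow> t = t') \<and>
     (\<forall>s t t'::'a. t * s = t' * s \<longrightarrow> t = t')"

definition linf :: "('a \<Rightarrow> real) \<Rightarrow> bool" where
  "linf f \<longleftrightarrow> (\<exists>B. \<forall>x. \<bar>f x\<bar> \<le> B)"

text \<open>A mean: positive linear functional on ell-infinity of norm one with value 1 on
  the constant function 1. (Norm one: |m f| \<le> sup norm of f, attained at 1.)\<close>
definition is_mean :: "(('a \<Rightarrow> real) \<Rightarrow> real) \<Rightarrow> bool" where
  "is_mean m \<longleftrightarrow>
     (\<forall>f g. linf f \<longrightarrow> linf g \<longrightarrow> m (\<lambda>x. f x + g x) = m f + m g) \<and>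
     (\<forall>c f. linf f \<longrightarrow> m (\<lambda>x. c * f x) = c * m f) \<and>
     (\<forall>f. linf f \<longrightarrow> (\<forall>x. 0 \<le> f x) \<longrightarrow> 0 \<le> m f) \<and>
     (\<forall>f. linf f \<longrightarrow> \<bar>m f\<bar> \<le> (SUP x. \<bar>f x\<bar>)) \<and>
     m (\<lambda>_. 1) = 1"

definition left_amenable :: "'a::monoid_mult itself \<Rightarrow> bool" where
  "left_amenable _ \<longleftrightarrow> (\<exists>m :: ('a \<Rightarrow> real) \<Rightarrow> real. is_mean m \<and>
     (\<forall>s f. linf f \<longrightarrow> m (\<lambda>x. f (s * x)) = m f))"

definition right_amenable :: "'a::monoid_mult itself \<Rightarrow> bool" where
  "right_amenable _ \<longleftrightarrow> (\<exists>m :: ('a \<Rightarrow> real) \<Rightarrow> real. is_mean m \<and>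
     (\<forall>s f. linf f \<longrightarrow> m (\<lambda>x. f (x * s)) = m f))"

text \<open>Normalized Hamming distance on Map(X); finite sets X are taken as finite sets of
  naturals, and elements of Map(X) as functions mapping X into X (only values on X matter).\<close>
definition hamming :: "nat set \<Rightarrow> (nat \<Rightarrow> nat) \<Rightarrow> (nat \<Rightarrow> nat) \<Rightarrow> real" where
  "hamming X f g = real (card {x\<in>X. f x \<noteq> g x}) / real (card X)"

definition sofic :: "'a::monoid_mult itself \<Rightarrow> bool" where
  "sofic _ \<longleftrightarrow> (\<forall>(K::'a set) (\<epsilon>::real). finite K \<longrightarrow> \<epsilon> > 0 \<longrightarrow>
     (\<exists>(X::nat set) (\<phi>::'a \<Rightarrow> nat \<Rightarrow> nat). finite X \<and> X \<noteq> {} \<and>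
        (\<forall>a. \<phi> a ` X \<subseteq> X) \<and>
        (\<forall>k1\<in>K. \<forall>k2\<in>K. hamming X (\<phi> (k1 * k2)) (\<phi> k1 \<circ> \<phi> k2) \<le> \<epsilon>) \<and>
        hamming X (\<phi> 1) id \<le> \<epsilon> \<and>
        (\<forall>k1\<in>K. \<forall>k2\<in>K. k1 \<noteq> k2 \<longrightarrow> hamming X (\<phi> k1) (\<phi> k2) \<ge> 1 - \<epsilon>)))"

end

theory Submission
  imports Defs "HOL-Analysis.Analysis"
begin

text \<open>
  An invariant mean yields Folner sets, and Folner sets of a cancellative monoid yield sofic
  approximations: on a finite F that few points leave under each k \<in> K, let k act by left
  multiplication (right division in the right amenable case), sending the points that leave F
  to a fixed base point. The result is multiplicative and unital outside the few stuck points,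
  and cancellation makes different k disagree wherever neither is stuck.

  Folner sets come from the mean by a minimax argument. For l \<in> [0,1]^(K \<times> M) the defect
  z \<mapsto> \<Sum>k. l(k,z) - (push-forward of l(k,-) along k)(z) has mean zero, so it is below \<epsilon>
  somewhere. Compactness of the cube and Kneser's minimax theorem give one probability vector p
  on finitely many points with \<Sum>z. p z * defect z l \<le> \<epsilon> for all l; taking l the indicator
  of p x > p (k x) yields \<Sum>k. \<Sum>x. max 0 (p x - p (k x)) \<le> \<epsilon>, and by Namioka's trick one of
  the level sets of p is a Folner set.
\<close>

definition hamming_on :: "'b set \<Rightarrow> ('b \<Rightarrow> 'b) \<Rightarrow> ('b \<Rightarrow> 'b) \<Rightarrow> real" where
  "hamming_on X f g = real (card {x\<in>X. f x \<noteq> g x}) / real (card X)"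

lemma hamming_eq_hamming_on: "hamming = hamming_on"
  unfolding hamming_def hamming_on_def by (intro ext) simp

lemma hamming_on_le:
  assumes "finite X" "X \<noteq> {}" "real (card {x\<in>X. f x \<noteq> g x}) \<le> e * real (card X)"
  shows "hamming_on X f g \<le> e"
  using assms unfolding hamming_on_def by (simp add: divide_le_eq card_gt_0_iff)

lemma hamming_on_ge:
  assumes "finite X" "X \<noteq> {}" "e * real (card X) \<le> real (card {x\<in>X. f x \<noteq> g x})"
  shows "e \<le> hamming_on X f g"
  using assms unfolding hamming_on_def by (simp add: le_divide_eq card_gt_0_iff)

lemma hamming_on_cong:
  assumes "\<And>x. x \<in> X \<Longrightarrow> f x = f' x" "\<And>x. x \<in> X \<Longrightarrow> g x = g' x"
  shows "hamming_on X f g = hamming_on X f' g'"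
  unfolding hamming_on_def using assms by (metis (no_types, lifting) Collect_cong)

lemma hamming_on_conjugate:
  assumes h: "bij_betw h F X" and "f ` F \<subseteq> F" "g ` F \<subseteq> F"
  shows "hamming_on X (\<lambda>j. h (f (inv_into F h j))) (\<lambda>j. h (g (inv_into F h j))) = hamming_on F f g"
proof -
  have inj: "inj_on h F" using h by (rule bij_betw_imp_inj_on)
  have "{j\<in>X. h (f (inv_into F h j)) \<noteq> h (g (inv_into F h j))} = h ` {x\<in>F. f x \<noteq> g x}"
  proof (intro equalityI subsetI)
    fix j assume j: "j \<in> {j\<in>X. h (f (inv_into F h j)) \<noteq> h (g (inv_into F h j))}"
    then have "inv_into F h j \<in> F" "h (inv_into F h j) = j"
      using bij_betw_inv_into_right[OF h] inv_into_into h unfolding bij_betw_def by force+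
    then show "j \<in> h ` {x\<in>F. f x \<noteq> g x}" using j by force
  next
    fix j assume "j \<in> h ` {x\<in>F. f x \<noteq> g x}"
    then obtain x where "x \<in> F" "f x \<noteq> g x" "j = h x" by blast
    then show "j \<in> {j\<in>X. h (f (inv_into F h j)) \<noteq> h (g (inv_into F h j))}"
      using assms inj bij_betw_apply[OF h] by (auto simp: inv_into_f_f inj_on_eq_iff image_subset_iff)
  qed
  moreover have "card (h ` {x\<in>F. f x \<noteq> g x}) = card {x\<in>F. f x \<noteq> g x}"
    using inj by (intro card_image) (auto intro: inj_on_subset)
  ultimately show ?thesis unfolding hamming_on_def using bij_betw_same_card[OF h] by simp
qed

definition sofic_approx :: "'b set \<Rightarrow> ('m::monoid_mult \<Rightarrow> 'b \<Rightarrow> 'b) \<Rightarrow> 'm set \<Rightarrow> real \<Rightarrow> bool" where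
  "sofic_approx X \<phi> K \<epsilon> \<longleftrightarrow> finite X \<and> X \<noteq> {} \<and> (\<forall>a. \<phi> a ` X \<subseteq> X) \<and>
     (\<forall>k1\<in>K. \<forall>k2\<in>K. hamming_on X (\<phi> (k1 * k2)) (\<phi> k1 \<circ> \<phi> k2) \<le> \<epsilon>) \<and>
     hamming_on X (\<phi> 1) id \<le> \<epsilon> \<and>
     (\<forall>k1\<in>K. \<forall>k2\<in>K. k1 \<noteq> k2 \<longrightarrow> 1 - \<epsilon> \<le> hamming_on X (\<phi> k1) (\<phi> k2))"

lemma sofic_iff_sofic_approx:
  "sofic TYPE('m::monoid_mult) \<longleftrightarrow>
     (\<forall>(K::'m set) \<epsilon>. finite K \<longrightarrow> \<epsilon> > 0 \<longrightarrow> (\<exists>(X::nat set) \<phi>. sofic_approx X \<phi> K \<epsilon>))"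
  unfolding sofic_def sofic_approx_def hamming_eq_hamming_on by simp

lemma sofic_approx_to_nat:
  assumes "sofic_approx F \<phi> K \<epsilon>"
  shows "\<exists>(X::nat set) \<psi>. sofic_approx X \<psi> K \<epsilon>"
proof -
  have F: "finite F" "F \<noteq> {}" "\<And>a. \<phi> a ` F \<subseteq> F" using assms unfolding sofic_approx_def by auto
  obtain h where h: "bij_betw h F {0..<card F}" using ex_bij_betw_finite_nat[OF F(1)] by blast
  define X where "X = {0..<card F}"
  define conj where "conj f = (\<lambda>j. h (f (inv_into F h j)))" for f
  have \<phi>F: "\<phi> a x \<in> F" if "x \<in> F" for a x using F(3) that by blast
  have h_inv: "inv_into F h j \<in> F" "h (inv_into F h j) = j" if "j \<in> X" for j
    using that h unfolding X_def by (auto simp: bij_betw_inv_into_right bij_betw_def inv_into_into)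
  have ham: "hamming_on X (conj f) (conj g) = hamming_on F f g" if "f ` F \<subseteq> F" "g ` F \<subseteq> F" for f g
    unfolding conj_def X_def using h that by (rule hamming_on_conjugate)
  have "hamming_on X (conj (\<phi> (k1 * k2))) (conj (\<phi> k1) \<circ> conj (\<phi> k2))
      = hamming_on X (conj (\<phi> (k1 * k2))) (conj (\<phi> k1 \<circ> \<phi> k2))" for k1 k2
    using \<phi>F h_inv by (intro hamming_on_cong) (auto simp: conj_def bij_betw_inv_into_left[OF h])
  moreover have "hamming_on X (conj (\<phi> 1)) id = hamming_on X (conj (\<phi> 1)) (conj id)"
    using h_inv by (intro hamming_on_cong) (auto simp: conj_def)
  moreover have "conj f ` X \<subseteq> X" if "f ` F \<subseteq> F" for f
    using that h_inv bij_betw_apply[OF h] unfolding conj_def X_def by (auto simp: image_subset_iff)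
  ultimately have "sofic_approx X (\<lambda>a. conj (\<phi> a)) K \<epsilon>"
    using assms F h unfolding sofic_approx_def X_def
    by (simp add: ham[unfolded X_def] image_subset_iff comp_def)
  then show ?thesis by blast
qed

text \<open>R a x y says that a moves x to y. Left multiplication y = a * x and right division
  y * a = x are instances; right multiplication is not, since it reverses products.\<close>

locale free_partial_action =
  fixes R :: "'m::monoid_mult \<Rightarrow> 'b \<Rightarrow> 'b \<Rightarrow> bool"
  assumes functional: "R a x y \<Longrightarrow> R a x y' \<Longrightarrow> y = y'"
    and compose: "R b x y \<Longrightarrow> R a y z \<Longrightarrow> R (a * b) x z"
    and decompose: "R b x y \<Longrightarrow> R (a * b) x z \<Longrightarrow> R a y z"
    and unit: "R 1 x x"
    and free: "R a x y \<Longrightarrow> R b x y \<Longrightarrow> a = b"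
begin

definition stuck :: "'b set \<Rightarrow> 'm \<Rightarrow> 'b set" where
  "stuck F a = {x\<in>F. \<not> (\<exists>y\<in>F. R a x y)}"

definition confine :: "'b set \<Rightarrow> 'b \<Rightarrow> 'm \<Rightarrow> 'b \<Rightarrow> 'b" where
  "confine F x0 a x = (if \<exists>y\<in>F. R a x y then THE y. y \<in> F \<and> R a x y else x0)"

lemma confine_eq: "y \<in> F \<Longrightarrow> R a x y \<Longrightarrow> confine F x0 a x = y"
  unfolding confine_def by (auto intro!: the_equality dest: functional)

lemma confine_stuck: "\<not> (\<exists>y\<in>F. R a x y) \<Longrightarrow> confine F x0 a x = x0"
  unfolding confine_def by simp

lemma confine_in: "x0 \<in> F \<Longrightarrow> confine F x0 a x \<in> F"
  using confine_eq confine_stuck by metis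

lemma confine_mult_mismatch:
  "{x\<in>F. confine F x0 (a * b) x \<noteq> confine F x0 a (confine F x0 b x)} \<subseteq> stuck F b"
proof (intro subsetI)
  fix x assume x: "x \<in> {x\<in>F. confine F x0 (a * b) x \<noteq> confine F x0 a (confine F x0 b x)}"
  show "x \<in> stuck F b"
  proof (rule ccontr)
    assume "x \<notin> stuck F b"
    then obtain y where y: "y \<in> F" "R b x y" using x unfolding stuck_def by auto
    have "confine F x0 (a * b) x = confine F x0 a y"
    proof (cases "\<exists>z\<in>F. R a y z")
      case True
      then show ?thesis using y compose confine_eq by metis
    next
      case False
      then have "\<not> (\<exists>z\<in>F. R (a * b) x z)" using y decompose by blast
      then show ?thesis using False confine_stuck by metis
    qed
    then show False using x y confine_eq by auto
  qed
qed

lemma confine_agree: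
  assumes "a \<noteq> b"
  shows "{x\<in>F. confine F x0 a x = confine F x0 b x} \<subseteq> stuck F a \<union> stuck F b"
proof (intro subsetI)
  fix x assume x: "x \<in> {x\<in>F. confine F x0 a x = confine F x0 b x}"
  show "x \<in> stuck F a \<union> stuck F b"
  proof (rule ccontr)
    assume "x \<notin> stuck F a \<union> stuck F b"
    then obtain y z where "y \<in> F" "R a x y" "z \<in> F" "R b x z" using x unfolding stuck_def by auto
    moreover from this have "y = z" using x confine_eq by auto
    ultimately show False using assms free by blast
  qed
qed

text \<open>Composition errors lie in one stuck set and separation failures in the union of two,
  hence the bound \<epsilon> / 2.\<close>

lemma sofic_approx_confine:
  assumes F: "finite F" "x0 \<in> F" and "\<epsilon> > 0"
    and stuck_small: "\<And>k. k \<in> K \<Longrightarrow> real (card (stuck F k)) \<le> \<epsilon> / 2 * real (card F)"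
  shows "sofic_approx F (confine F x0) K \<epsilon>"
proof -
  have ne: "F \<noteq> {}" using F by blast
  have fin_stuck: "finite (stuck F k)" for k using F unfolding stuck_def by simp
  have mult: "hamming_on F (confine F x0 (k1 * k2)) (confine F x0 k1 \<circ> confine F x0 k2) \<le> \<epsilon>"
    if "k2 \<in> K" for k1 k2
  proof (rule hamming_on_le[OF F(1) ne])
    have "card {x\<in>F. confine F x0 (k1 * k2) x \<noteq> (confine F x0 k1 \<circ> confine F x0 k2) x}
        \<le> card (stuck F k2)"
      using confine_mult_mismatch fin_stuck by (simp add: card_mono)
    then show "real (card {x\<in>F. confine F x0 (k1 * k2) x \<noteq> (confine F x0 k1 \<circ> confine F x0 k2) x})
        \<le> \<epsilon> * real (card F)"
      using stuck_small[OF that] \<open>\<epsilon> > 0\<close> mult_right_mono[of "\<epsilon> / 2" \<epsilon> "real (card F)"]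
      by linarith
  qed
  have "card {x\<in>F. confine F x0 1 x \<noteq> id x} = 0" using F(1) confine_eq unit by auto
  then have one: "hamming_on F (confine F x0 1) id \<le> \<epsilon>"
    using \<open>\<epsilon> > 0\<close> by (intro hamming_on_le[OF F(1) ne]) simp
  have sep: "1 - \<epsilon> \<le> hamming_on F (confine F x0 k1) (confine F x0 k2)"
    if "k1 \<in> K" "k2 \<in> K" "k1 \<noteq> k2" for k1 k2
  proof (rule hamming_on_ge[OF F(1) ne])
    let ?A = "{x\<in>F. confine F x0 k1 x \<noteq> confine F x0 k2 x}"
    let ?B = "{x\<in>F. confine F x0 k1 x = confine F x0 k2 x}"
    have "card ?B \<le> card (stuck F k1 \<union> stuck F k2)"
      using confine_agree[OF that(3)] fin_stuck by (intro card_mono) auto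
    also have "\<dots> \<le> card (stuck F k1) + card (stuck F k2)" by (rule card_Un_le)
    finally have "real (card ?B) \<le> \<epsilon> * real (card F)"
      using stuck_small[OF that(1)] stuck_small[OF that(2)] by linarith
    moreover have "card F = card (?A \<union> ?B)" by (rule arg_cong[where f = card]) auto
    moreover have "card (?A \<union> ?B) = card ?A + card ?B" using F(1) by (intro card_Un_disjoint) auto
    ultimately show "(1 - \<epsilon>) * real (card F) \<le> real (card ?A)" by (simp add: algebra_simps)
  qed
  show ?thesis
    unfolding sofic_approx_def using F ne mult one sep confine_in by (auto simp: image_subset_iff)
qed

lemma sofic_if_folner:
  assumes folner: "\<And>(K::'m set) \<epsilon>. finite K \<Longrightarrow> \<epsilon> > 0 \<Longrightarrow>
    \<exists>F. finite F \<and> F \<noteq> {} \<and> (\<forall>k\<in>K. real (card (stuck F k)) \<le> \<epsilon> * real (card F))"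
  shows "sofic TYPE('m)"
  unfolding sofic_iff_sofic_approx
proof (intro allI impI)
  fix K :: "'m set" and \<epsilon> :: real
  assume "finite K" "\<epsilon> > 0"
  then obtain F where F: "finite F" "F \<noteq> {}" "\<forall>k\<in>K. real (card (stuck F k)) \<le> \<epsilon> / 2 * real (card F)"
    using folner[of K "\<epsilon> / 2"] by auto
  then obtain x0 where "x0 \<in> F" by blast
  then show "\<exists>(X::nat set) \<phi>. sofic_approx X \<phi> K \<epsilon>"
    using sofic_approx_confine[of F x0 \<epsilon> K] F \<open>\<epsilon> > 0\<close> sofic_approx_to_nat by blast
qed

end

lemma namioka_level_split:
  fixes p :: "'a \<Rightarrow> real" and act :: "'k \<Rightarrow> 'a \<Rightarrow> 'a"
  assumes T: "finite T" and p_nonneg: "\<And>x. 0 \<le> p x" and p_supp: "\<And>x. x \<notin> T \<Longrightarrow> p x = 0"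
    and P_def: "P = {x\<in>T. 0 < p x}" and v_pos: "0 < v" and v_le: "\<And>x. x \<in> P \<Longrightarrow> v \<le> p x"
  defines "p' \<equiv> \<lambda>x. max 0 (p x - v)"
  shows "sum p T = v * real (card P) + sum p' T"
    and "(\<Sum>k\<in>K. \<Sum>x\<in>T. max 0 (p x - p (act k x))) =
      v * (\<Sum>k\<in>K. real (card {x\<in>P. act k x \<notin> P})) + (\<Sum>k\<in>K. \<Sum>x\<in>T. max 0 (p' x - p' (act k x)))"
proof -
  have vals: "(y \<notin> P \<and> p y = 0) \<or> (y \<in> P \<and> v \<le> p y)" for y
    using p_nonneg[of y] p_supp[of y] v_le[of y] unfolding P_def by force
  have split: "p y = v * of_bool (y \<in> P) + p' y" for y
    using vals[of y] v_pos unfolding p'_def by auto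
  have split_pos: "max 0 (p x - p y) = v * of_bool (x \<in> P \<and> y \<notin> P) + max 0 (p' x - p' y)" for x y
    using vals[of x] vals[of y] v_pos unfolding p'_def by auto
  have P_sub: "P \<subseteq> T" unfolding P_def by blast
  show "sum p T = v * real (card P) + sum p' T"
    using T P_sub by (simp add: split sum.distrib sum_distrib_left[symmetric] Int_absorb1)
  have "(\<Sum>x\<in>T. of_bool (x \<in> P \<and> act k x \<notin> P)) = real (card {x\<in>P. act k x \<notin> P})" for k
    using T P_sub by (simp add: Int_def) (metis (lifting) subsetD)
  then show "(\<Sum>k\<in>K. \<Sum>x\<in>T. max 0 (p x - p (act k x))) =
      v * (\<Sum>k\<in>K. real (card {x\<in>P. act k x \<notin> P})) + (\<Sum>k\<in>K. \<Sum>x\<in>T. max 0 (p' x - p' (act k x)))"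
    by (simp add: split_pos sum.distrib sum_distrib_left[symmetric])
qed

text \<open>Namioka's trick: write p as a positive combination of indicators of its level sets. If
  none of them were a Folner set, removing the lowest level would leave a weight with smaller
  support that still violates the conclusion.\<close>

lemma namioka_trick:
  fixes p :: "'a \<Rightarrow> real" and act :: "'k \<Rightarrow> 'a \<Rightarrow> 'a"
  assumes T: "finite T" and "\<And>x. 0 \<le> p x" and "\<And>x. x \<notin> T \<Longrightarrow> p x = 0" and "0 < sum p T"
    and "(\<Sum>k\<in>K. \<Sum>x\<in>T. max 0 (p x - p (act k x))) \<le> e * sum p T"
  shows "\<exists>F\<subseteq>T. F \<noteq> {} \<and> (\<Sum>k\<in>K. real (card {x\<in>F. act k x \<notin> F})) \<le> e * real (card F)"
  using assms(2-)
proof (induction "card {x\<in>T. 0 < p x}" arbitrary: p rule: less_induct)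
  case (less p)
  define P where "P = {x\<in>T. 0 < p x}"
  have "finite P" using T unfolding P_def by simp
  moreover have "P \<noteq> {}"
  proof
    assume "P = {}"
    then have "p x = 0" if "x \<in> T" for x using that less.prems(1)[of x] unfolding P_def by force
    then show False using less.prems(3) by simp
  qed
  ultimately obtain x0 where x0: "x0 \<in> P" "Min (p ` P) = p x0" by (rule obtains_MIN)
  have x0_min: "p x0 \<le> p x" if "x \<in> P" for x
    using x0(2) Min_le[of "p ` P" "p x"] \<open>finite P\<close> that by simp
  have "0 < p x0" using x0(1) unfolding P_def by simp
  define p' where "p' = (\<lambda>x. max 0 (p x - p x0))"
  define C where "C = (\<Sum>k\<in>K. real (card {x\<in>P. act k x \<notin> P}))"
  define \<Phi>' where "\<Phi>' = (\<Sum>k\<in>K. \<Sum>x\<in>T. max 0 (p' x - p' (act k x)))"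
  have peel: "sum p T = p x0 * real (card P) + sum p' T"
    "(\<Sum>k\<in>K. \<Sum>x\<in>T. max 0 (p x - p (act k x))) = p x0 * C + \<Phi>'"
    using namioka_level_split[OF T less.prems(1,2) P_def \<open>0 < p x0\<close> x0_min]
    unfolding p'_def C_def \<Phi>'_def by simp_all
  show ?case
  proof (cases "C \<le> e * real (card P)")
    case True
    moreover have "P \<subseteq> T" unfolding P_def by blast
    ultimately show ?thesis using \<open>P \<noteq> {}\<close> unfolding C_def by blast
  next
    case False
    then have "p x0 * (e * real (card P)) < p x0 * C"
      using \<open>0 < p x0\<close> by simp
    then have small': "\<Phi>' < e * sum p' T"
      using less.prems(4) peel by (simp add: algebra_simps)
    have p'_nonneg: "\<And>x. 0 \<le> p' x" and p'_supp: "\<And>x. x \<notin> T \<Longrightarrow> p' x = 0"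
      unfolding p'_def using less.prems(2) \<open>0 < p x0\<close> by auto
    have "0 \<le> \<Phi>'" unfolding \<Phi>'_def by (auto intro!: sum_nonneg)
    moreover have "0 \<le> sum p' T" using p'_nonneg by (simp add: sum_nonneg)
    ultimately have pos': "0 < sum p' T"
      using small' by (cases "e \<le> 0") (auto simp: mult_nonpos_nonneg order.strict_iff_order)
    have "{x\<in>T. 0 < p' x} \<subseteq> P - {x0}" using \<open>0 < p x0\<close> unfolding p'_def P_def by auto
    then have "card {x\<in>T. 0 < p' x} < card P"
      using \<open>finite P\<close> x0(1) by (meson card_Diff1_less card_mono finite_Diff order_le_less_trans)
    moreover have "\<Phi>' \<le> e * sum p' T" using small' by simp
    ultimately show ?thesis
      using less.hyps[OF _ p'_nonneg p'_supp pos'] unfolding P_def \<Phi>'_def by simp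
  qed
qed

text \<open>Functions into real carry no vector-space instance in the library, so convexity in
  'i \<Rightarrow> real is expressed through explicit mixtures.\<close>

definition mix :: "real \<Rightarrow> ('i \<Rightarrow> real) \<Rightarrow> ('i \<Rightarrow> real) \<Rightarrow> 'i \<Rightarrow> real" where
  "mix u x y = (\<lambda>i. u * x i + (1 - u) * y i)"

definition mix_convex :: "('i \<Rightarrow> real) set \<Rightarrow> bool" where
  "mix_convex L \<longleftrightarrow> (\<forall>x\<in>L. \<forall>y\<in>L. \<forall>u\<in>{0..1}. mix u x y \<in> L)"

definition mix_affine_on :: "('i \<Rightarrow> real) set \<Rightarrow> (('i \<Rightarrow> real) \<Rightarrow> real) \<Rightarrow> bool" where
  "mix_affine_on L f \<longleftrightarrow> (\<forall>x\<in>L. \<forall>y\<in>L. \<forall>u\<in>{0..1}. f (mix u x y) = u * f x + (1 - u) * f y)"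

lemma nonpos_if_bounded_along_ray:
  fixes a X Y :: real
  assumes "\<And>r. 0 < r \<Longrightarrow> 0 \<le> a * (X - r) + Y"
  shows "a \<le> 0"
proof (rule ccontr)
  assume "\<not> a \<le> 0"
  then have "0 < (\<bar>a * X + Y\<bar> + 1) / a" and "a * ((\<bar>a * X + Y\<bar> + 1) / a) = \<bar>a * X + Y\<bar> + 1"
    by simp_all
  with assms show False by (smt (verit) right_diff_distrib)
qed

lemma affine_pair_separation:
  assumes L: "mix_convex L" "L \<noteq> {}" and f: "mix_affine_on L f" and g: "mix_affine_on L g"
    and cover: "\<And>x. x \<in> L \<Longrightarrow> f x \<le> c \<or> g x \<le> c"
  obtains a b where "a \<le> 0" "b \<le> 0" "a + b < 0" "\<And>x. x \<in> L \<Longrightarrow> 0 \<le> a * (f x - c) + b * (g x - c)"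
proof -
  \<comment> \<open>0 \<notin> S because at each point f or g is at most c; the shifts by r, s make the
    separating functional's coefficients nonpositive.\<close>
  define S where "S = {(f x - c - r, g x - c - s) | x r s. x \<in> L \<and> 0 < r \<and> 0 < s}"
  have "convex S"
    unfolding convex_def
  proof (intro ballI allI impI)
    fix w z :: "real \<times> real" and u v :: real
    assume "w \<in> S" "z \<in> S" and uv: "0 \<le> u" "0 \<le> v" "u + v = 1"
    then obtain x r s y r' s' where w: "w = (f x - c - r, g x - c - s)" "x \<in> L" "0 < r" "0 < s"
      and z: "z = (f y - c - r', g y - c - s')" "y \<in> L" "0 < r'" "0 < s'"
      unfolding S_def by blast
    have u: "u \<in> {0..1}" and v: "v = 1 - u" using uv by auto
    have "mix u x y \<in> L" using L(1) w z u unfolding mix_convex_def by blast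
    moreover have "0 < u * r + (1 - u) * r'" "0 < u * s + (1 - u) * s'"
      using u w z convex_bound_lt[of "-r" 0 "-r'" u "1 - u"] convex_bound_lt[of "-s" 0 "-s'" u "1 - u"]
      by auto
    moreover have "u *\<^sub>R w + v *\<^sub>R z =
      (f (mix u x y) - c - (u * r + (1 - u) * r'), g (mix u x y) - c - (u * s + (1 - u) * s'))"
      using f g w z u unfolding mix_affine_on_def v by (simp add: algebra_simps)
    ultimately show "u *\<^sub>R w + v *\<^sub>R z \<in> S" unfolding S_def by blast
  qed
  moreover have "0 \<notin> S" using cover unfolding S_def by (force simp: zero_prod_def)
  ultimately obtain n where "n \<noteq> 0" and n: "\<And>w. w \<in> S \<Longrightarrow> 0 \<le> inner n w"
    using separating_hyperplane_set_0 by blast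
  obtain a b where ab: "n = (a, b)" by (cases n)
  have key: "0 \<le> a * (f x - c - r) + b * (g x - c - s)" if "x \<in> L" "0 < r" "0 < s" for x r s
    using n[of "(f x - c - r, g x - c - s)"] that unfolding S_def ab by (auto simp: inner_prod_def)
  obtain x0 where "x0 \<in> L" using L(2) by blast
  have "a \<le> 0"
    using key[OF \<open>x0 \<in> L\<close> _ zero_less_one]
    by (intro nonpos_if_bounded_along_ray[where X = "f x0 - c" and Y = "b * (g x0 - c - 1)"]) simp
  moreover have "b \<le> 0"
    using key[OF \<open>x0 \<in> L\<close> zero_less_one]
    by (intro nonpos_if_bounded_along_ray[where X = "g x0 - c" and Y = "a * (f x0 - c - 1)"])
      (simp add: add.commute)
  moreover have "a + b < 0" using \<open>a \<le> 0\<close> \<open>b \<le> 0\<close> \<open>n \<noteq> 0\<close> ab by (auto simp: zero_prod_def)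
  moreover have "0 \<le> a * (f x - c) + b * (g x - c)" if "x \<in> L" for x
  proof (rule field_le_epsilon)
    fix e :: real assume "0 < e"
    define t where "t = e / - (a + b)"
    have "0 < t" "(a + b) * t = - e" using \<open>0 < e\<close> \<open>a + b < 0\<close> unfolding t_def
      by (simp_all add: divide_pos_neg field_simps)
    moreover from key[OF that \<open>0 < t\<close> \<open>0 < t\<close>]
    have "0 \<le> a * (f x - c) + b * (g x - c) - (a + b) * t" by (simp add: algebra_simps)
    ultimately show "0 \<le> a * (f x - c) + b * (g x - c) + e" by simp
  qed
  ultimately show ?thesis using that by blast
qed

lemma kneser_minimax_two:
  assumes L: "mix_convex L" and f: "mix_affine_on L f" and g: "mix_affine_on L g"
    and cover: "\<And>x. x \<in> L \<Longrightarrow> f x \<le> c \<or> g x \<le> c"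
  obtains s where "s \<in> {0..1}" "\<And>x. x \<in> L \<Longrightarrow> s * f x + (1 - s) * g x \<le> c"
proof (cases "L = {}")
  case False
  then obtain a b where ab: "a \<le> 0" "b \<le> 0" "a + b < 0"
    and sep: "\<And>x. x \<in> L \<Longrightarrow> 0 \<le> a * (f x - c) + b * (g x - c)"
    using affine_pair_separation[OF L _ f g cover] by blast
  define s where "s = a / (a + b)"
  have "s \<in> {0..1}" using ab unfolding s_def by (auto simp: divide_simps)
  moreover have "s * f x + (1 - s) * g x \<le> c" if "x \<in> L" for x
  proof -
    have "1 - s = b / (a + b)" using ab unfolding s_def by (simp add: field_simps)
    then have "s * (f x - c) + (1 - s) * (g x - c) = (a * (f x - c) + b * (g x - c)) / (a + b)"
      unfolding s_def by (simp add: add_divide_distrib)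
    also have "\<dots> \<le> 0" using sep[OF that] ab by (simp add: divide_nonneg_neg)
    finally show ?thesis by (simp add: algebra_simps)
  qed
  ultimately show ?thesis using that by blast
qed (use that[of 0] in auto)

lemma mix_affine_on_sum:
  assumes "\<And>z. z \<in> Z \<Longrightarrow> mix_affine_on L (\<phi> z)"
  shows "mix_affine_on L (\<lambda>x. \<Sum>z\<in>Z. t z * \<phi> z x)"
  unfolding mix_affine_on_def
proof (intro ballI)
  fix x y u assume "x \<in> L" "y \<in> L" "u \<in> {0..1::real}"
  then have eq: "\<phi> z (mix u x y) = u * \<phi> z x + (1 - u) * \<phi> z y" if "z \<in> Z" for z
    using assms[OF that] unfolding mix_affine_on_def by blast
  have "(\<Sum>z\<in>Z. t z * \<phi> z (mix u x y)) = (\<Sum>z\<in>Z. u * (t z * \<phi> z x) + (1 - u) * (t z * \<phi> z y))"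
  proof (rule sum.cong[OF refl])
    fix z assume "z \<in> Z"
    show "t z * \<phi> z (mix u x y) = u * (t z * \<phi> z x) + (1 - u) * (t z * \<phi> z y)"
      unfolding eq[OF \<open>z \<in> Z\<close>] by (simp add: algebra_simps)
  qed
  then show "(\<Sum>z\<in>Z. t z * \<phi> z (mix u x y)) = u * (\<Sum>z\<in>Z. t z * \<phi> z x) + (1 - u) * (\<Sum>z\<in>Z. t z * \<phi> z y)"
    by (simp add: sum.distrib sum_distrib_left)
qed

lemma mix_convex_superlevel:
  assumes "mix_convex L" "mix_affine_on L f"
  shows "mix_convex {x\<in>L. c < f x}"
  unfolding mix_convex_def
proof (intro ballI)
  fix x y u assume x: "x \<in> {x\<in>L. c < f x}" and y: "y \<in> {x\<in>L. c < f x}" and u: "u \<in> {0..1::real}"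
  have "c < u * f x + (1 - u) * f y"
    using convex_bound_lt[of "- f x" "- c" "- f y" u "1 - u"] x y u by simp
  then show "mix u x y \<in> {x\<in>L. c < f x}" using assms x y u unfolding mix_convex_def mix_affine_on_def by simp
qed

lemma kneser_minimax:
  assumes Z: "finite Z" "Z \<noteq> {}" and L: "mix_convex L" and \<phi>: "\<And>z. z \<in> Z \<Longrightarrow> mix_affine_on L (\<phi> z)"
    and cover: "\<And>x. x \<in> L \<Longrightarrow> \<exists>z\<in>Z. \<phi> z x \<le> c"
  shows "\<exists>t. (\<forall>z\<in>Z. 0 \<le> t z) \<and> sum t Z = 1 \<and> (\<forall>x\<in>L. (\<Sum>z\<in>Z. t z * \<phi> z x) \<le> c)"
  using Z L \<phi> cover
proof (induction Z arbitrary: L rule: finite_ne_induct)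
  case (singleton z)
  then show ?case by (intro exI[of _ "\<lambda>_. 1"]) auto
next
  case (insert z Z)
  define L' where "L' = {x\<in>L. c < \<phi> z x}"
  have "mix_convex L'" unfolding L'_def using insert.prems by (intro mix_convex_superlevel) auto
  moreover have "mix_affine_on L' (\<phi> z')" if "z' \<in> Z" for z'
    using insert.prems(2) that unfolding mix_affine_on_def L'_def by auto
  moreover have "\<exists>z'\<in>Z. \<phi> z' x \<le> c" if "x \<in> L'" for x
    using insert.prems(3) that unfolding L'_def by fastforce
  ultimately obtain t where t: "\<forall>z'\<in>Z. 0 \<le> t z'" "sum t Z = 1" "\<forall>x\<in>L'. (\<Sum>z'\<in>Z. t z' * \<phi> z' x) \<le> c"
    using insert.IH by blast
  define \<psi> where "\<psi> = (\<lambda>x. \<Sum>z'\<in>Z. t z' * \<phi> z' x)"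
  have "mix_affine_on L \<psi>" unfolding \<psi>_def using insert.prems(2) by (intro mix_affine_on_sum) auto
  moreover have "\<psi> x \<le> c \<or> \<phi> z x \<le> c" if "x \<in> L" for x
    using t(3) that unfolding \<psi>_def L'_def by force
  ultimately obtain s where s: "s \<in> {0..1}" "\<And>x. x \<in> L \<Longrightarrow> s * \<psi> x + (1 - s) * \<phi> z x \<le> c"
    using kneser_minimax_two[OF insert.prems(1)] insert.prems(2) by blast
  define t' where "t' = (\<lambda>y. if y = z then 1 - s else s * t y)"
  have sum_t': "(\<Sum>y\<in>insert z Z. t' y * h y) = (1 - s) * h z + s * (\<Sum>y\<in>Z. t y * h y)" for h
  proof -
    have "(\<Sum>y\<in>insert z Z. t' y * h y) = t' z * h z + (\<Sum>y\<in>Z. t' y * h y)"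
      by (rule sum.insert[OF insert.hyps(1,3)])
    also have "(\<Sum>y\<in>Z. t' y * h y) = (\<Sum>y\<in>Z. s * (t y * h y))"
      using insert.hyps(3) unfolding t'_def by (intro sum.cong) auto
    finally show ?thesis unfolding t'_def by (simp add: sum_distrib_left)
  qed
  have "\<forall>y\<in>insert z Z. 0 \<le> t' y" using s(1) t(1) unfolding t'_def by auto
  moreover have "sum t' (insert z Z) = 1" using sum_t'[of "\<lambda>_. 1"] t(2) by simp
  moreover have "\<forall>x\<in>L. (\<Sum>y\<in>insert z Z. t' y * \<phi> y x) \<le> c"
    using s(2) unfolding sum_t' \<psi>_def by (simp add: algebra_simps)
  ultimately show ?case by blast
qed

lemma linf_bound: "(\<And>x. \<bar>f x\<bar> \<le> B) \<Longrightarrow> linf f"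
  unfolding linf_def by blast

lemma linf_const: "linf (\<lambda>_. c)"
  by (rule linf_bound[of _ "\<bar>c\<bar>"]) simp

lemma linf_add: "linf f \<Longrightarrow> linf g \<Longrightarrow> linf (\<lambda>x. f x + g x)"
  unfolding linf_def by (meson abs_triangle_ineq add_mono order_trans)

lemma linf_scale: "linf f \<Longrightarrow> linf (\<lambda>x. c * f x)"
  unfolding linf_def by (metis abs_ge_zero abs_mult mult_left_mono)

lemma linf_diff: "linf f \<Longrightarrow> linf g \<Longrightarrow> linf (\<lambda>x. f x - g x)"
  using linf_add[of f "\<lambda>x. (-1) * g x"] linf_scale[of g "-1"] by simp

lemma linf_sum: "finite I \<Longrightarrow> (\<And>i. i \<in> I \<Longrightarrow> linf (F i)) \<Longrightarrow> linf (\<lambda>x. \<Sum>i\<in>I. F i x)"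
  by (induction I rule: finite_induct) (auto intro: linf_add linf_const[of 0, simplified])

context
  fixes m :: "('a \<Rightarrow> real) \<Rightarrow> real"
  assumes mean: "is_mean m"
begin

lemma mean_add: "linf f \<Longrightarrow> linf g \<Longrightarrow> m (\<lambda>x. f x + g x) = m f + m g"
  using mean unfolding is_mean_def by blast

lemma mean_scale: "linf f \<Longrightarrow> m (\<lambda>x. c * f x) = c * m f"
  using mean unfolding is_mean_def by blast

lemma mean_const: "m (\<lambda>_. c) = c"
  using mean_scale[OF linf_const[of 1], of c] mean unfolding is_mean_def by simp

lemma mean_diff: "linf f \<Longrightarrow> linf g \<Longrightarrow> m (\<lambda>x. f x - g x) = m f - m g"
  using mean_add[of f "\<lambda>x. (-1) * g x"] mean_scale[of g "-1"] linf_scale[of g "-1"] by simp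

lemma mean_sum:
  "finite I \<Longrightarrow> (\<And>i. i \<in> I \<Longrightarrow> linf (F i)) \<Longrightarrow> m (\<lambda>x. \<Sum>i\<in>I. F i x) = (\<Sum>i\<in>I. m (F i))"
proof (induction I rule: finite_induct)
  case empty
  then show ?case using mean_const[of 0] by simp
next
  case (insert a I)
  then show ?case using mean_add[of "F a" "\<lambda>x. \<Sum>i\<in>I. F i x"] linf_sum[of I F] by simp
qed

lemma mean_lower_bound:
  assumes "linf f" "\<And>x. c \<le> f x"
  shows "c \<le> m f"
proof -
  have "0 \<le> m (\<lambda>x. f x - c)"
    using mean linf_diff[OF assms(1) linf_const] assms(2) unfolding is_mean_def by simp
  then show ?thesis using mean_diff[OF assms(1) linf_const] mean_const by simp
qed

end

definition unit_cube :: "('i \<Rightarrow> real) set" where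
  "unit_cube = {l. \<forall>i. l i \<in> {0..1}}"

definition defect :: "'k set \<Rightarrow> ('k \<Rightarrow> 'a \<Rightarrow> 'a) \<Rightarrow> 'a \<Rightarrow> ('k \<times> 'a \<Rightarrow> real) \<Rightarrow> real" where
  "defect K act z l = (\<Sum>k\<in>K. l (k, z) - (\<Sum>x | act k x = z. l (k, x)))"

lemma inj_preimage_subsingleton: "inj f \<Longrightarrow> \<exists>x0. {x. f x = z} \<subseteq> {x0}"
  unfolding inj_def by blast

lemma sum_preimage_inj_bounds:
  fixes q :: "'a \<Rightarrow> real"
  assumes "inj f" "\<And>x. q x \<in> {0..1}"
  shows "(\<Sum>x | f x = z. q x) \<in> {0..1}"
proof -
  obtain x0 where "{x. f x = z} \<subseteq> {x0}" using inj_preimage_subsingleton[OF assms(1)] by blast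
  then have "{x. f x = z} = {} \<or> {x. f x = z} = {x0}" by blast
  then show ?thesis using assms(2) by auto
qed

lemma sum_preimage_inj_image: "inj f \<Longrightarrow> (\<Sum>x | f x = f y. q x) = q y"
  by (simp add: inj_eq)

lemma mix_convex_unit_cube: "mix_convex unit_cube"
  unfolding mix_convex_def unit_cube_def mix_def
proof (intro ballI)
  fix x y :: "'i \<Rightarrow> real" and u :: real
  assume "x \<in> {l. \<forall>i. l i \<in> {0..1}}" "y \<in> {l. \<forall>i. l i \<in> {0..1}}" "u \<in> {0..1}"
  then have "u * x i + (1 - u) * y i \<in> {0..1}" for i
    using convex_bound_le[of "x i" 1 "y i" u "1 - u"] by auto
  then show "(\<lambda>i. u * x i + (1 - u) * y i) \<in> {l. \<forall>i. l i \<in> {0..1}}" by simp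
qed

lemma compact_unit_cube: "compact (unit_cube :: ('i \<Rightarrow> real) set)"
proof -
  have "unit_cube = PiE UNIV (\<lambda>_::'i. {0..1::real})" unfolding unit_cube_def PiE_def Pi_def by auto
  moreover have "compactin (product_topology (\<lambda>_. euclidean) UNIV) (PiE UNIV (\<lambda>_::'i. {0..1::real}))"
    by (simp add: compactin_PiE)
  ultimately show ?thesis by (simp add: euclidean_product_topology)
qed

lemma continuous_on_defect: "continuous_on UNIV (defect K act z)"
  unfolding defect_def by (intro continuous_intros continuous_on_product_coordinates)

lemma mix_affine_on_defect: "mix_affine_on L (defect K act z)"
  unfolding mix_affine_on_def defect_def mix_def
  by (simp add: sum.distrib sum_distrib_left sum_subtractf algebra_simps)

lemma sum_mult_preimage_inj:
  fixes p q :: "'a \<Rightarrow> real"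
  assumes Z: "finite Z" and "inj f" and p: "\<And>x. x \<notin> Z \<Longrightarrow> p x = 0"
    and q: "\<And>x. x \<notin> Z \<Longrightarrow> p (f x) * q x = 0"
  shows "(\<Sum>z\<in>Z. p z * (\<Sum>x | f x = z. q x)) = (\<Sum>x\<in>Z. p (f x) * q x)"
proof -
  define D where "D = {x. f x \<in> Z}"
  have D: "D = (\<Union>z\<in>Z. {x. f x = z})" unfolding D_def by auto
  have fin: "finite {x. f x = z}" for z
    using inj_preimage_subsingleton[OF \<open>inj f\<close>] finite_subset by (metis finite.emptyI finite_insert)
  have "finite D" unfolding D using Z fin by blast
  have "(\<Sum>z\<in>Z. p z * (\<Sum>x | f x = z. q x)) = (\<Sum>z\<in>Z. \<Sum>x | f x = z. p (f x) * q x)"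
    by (intro sum.cong refl) (auto simp: sum_distrib_left)
  also have "\<dots> = (\<Sum>x\<in>D. p (f x) * q x)"
    unfolding D using Z fin by (intro sum.UNION_disjoint[symmetric]) auto
  also have "\<dots> = (\<Sum>x\<in>D \<union> Z. p (f x) * q x)"
    using \<open>finite D\<close> Z p by (intro sum.mono_neutral_left) (auto simp: D_def)
  also have "\<dots> = (\<Sum>x\<in>Z. p (f x) * q x)"
    using \<open>finite D\<close> Z q by (intro sum.mono_neutral_right) auto
  finally show ?thesis .
qed

text \<open>Against the weight p, defect pairs l with \<Sum>k. \<Sum>x. (p x - p (act k x)) * l (k, x); the
  indicator below picks out the positive parts.\<close>

lemma weighted_defect_indicator:
  fixes p :: "'a \<Rightarrow> real" and act :: "'k \<Rightarrow> 'a \<Rightarrow> 'a"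
  assumes Z: "finite Z" and inj: "\<And>k. inj (act k)"
    and p_nonneg: "\<And>x. 0 \<le> p x" and p_supp: "\<And>x. x \<notin> Z \<Longrightarrow> p x = 0"
  shows "(\<Sum>z\<in>Z. p z * defect K act z (\<lambda>(k, x). of_bool (p (act k x) < p x)))
    = (\<Sum>k\<in>K. \<Sum>x\<in>Z. max 0 (p x - p (act k x)))"
proof -
  define ind where "ind k x = (of_bool (p (act k x) < p x) :: real)" for k x
  have pushed: "(\<Sum>z\<in>Z. p z * (\<Sum>x | act k x = z. ind k x)) = (\<Sum>x\<in>Z. p (act k x) * ind k x)" for k
    using Z inj p_supp by (intro sum_mult_preimage_inj) (auto simp: ind_def p_nonneg not_less)
  have "(\<Sum>z\<in>Z. p z * defect K act z (\<lambda>(k, x). ind k x))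
      = (\<Sum>k\<in>K. (\<Sum>z\<in>Z. p z * ind k z) - (\<Sum>z\<in>Z. p z * (\<Sum>x | act k x = z. ind k x)))"
    unfolding defect_def
    by (simp add: sum_distrib_left right_diff_distrib sum_subtractf sum.swap[of _ Z K])
  also have "\<dots> = (\<Sum>k\<in>K. \<Sum>x\<in>Z. max 0 (p x - p (act k x)))"
    unfolding pushed sum_subtractf[symmetric] by (intro sum.cong refl) (auto simp: ind_def)
  finally show ?thesis unfolding ind_def by simp
qed

context
  fixes m :: "('a \<Rightarrow> real) \<Rightarrow> real" and act :: "'k \<Rightarrow> 'a \<Rightarrow> 'a"
  assumes mean: "is_mean m"
    and invariant: "\<And>k f. linf f \<Longrightarrow> m (\<lambda>x. f (act k x)) = m f"
    and inj_act: "\<And>k. inj (act k)"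
begin

lemma defect_small_somewhere:
  assumes "finite K" "0 < e" "l \<in> unit_cube"
  shows "\<exists>z. defect K act z l < e"
proof (rule ccontr)
  assume "\<not> (\<exists>z. defect K act z l < e)"
  then have ge: "e \<le> defect K act z l" for z by (simp add: not_less)
  define A where "A k z = l (k, z)" for k z
  define B where "B k z = (\<Sum>x | act k x = z. l (k, x))" for k z
  have linf_A: "linf (A k)" for k
    using \<open>l \<in> unit_cube\<close> by (intro linf_bound[of _ 1]) (auto simp: A_def unit_cube_def)
  have linf_B: "linf (B k)" for k
    using sum_preimage_inj_bounds[OF inj_act, of "\<lambda>x. l (k, x)"] \<open>l \<in> unit_cube\<close>
    by (intro linf_bound[of _ 1]) (auto simp: B_def unit_cube_def)
  \<comment> \<open>B k is the push-forward of A k along act k, so invariance makes their means equal.\<close>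
  have "(\<lambda>x. B k (act k x)) = A k" for k
    unfolding A_def B_def using sum_preimage_inj_image[OF inj_act, where q = "\<lambda>x. l (k, x)"] by simp
  then have "m (A k) = m (B k)" for k
    using invariant[of "B k" k, OF linf_B] by simp
  moreover have defect_AB: "(\<lambda>z. defect K act z l) = (\<lambda>z. \<Sum>k\<in>K. A k z - B k z)"
    unfolding defect_def A_def B_def by simp
  ultimately have "m (\<lambda>z. defect K act z l) = 0"
    using \<open>finite K\<close> by (simp add: mean_sum[OF mean] mean_diff[OF mean] linf_diff linf_A linf_B)
  moreover have "linf (\<lambda>z. defect K act z l)"
    unfolding defect_AB using \<open>finite K\<close> by (intro linf_sum linf_diff linf_A linf_B)
  ultimately show False using mean_lower_bound[OF mean _ ge] \<open>0 < e\<close> by fastforce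
qed

lemma defect_weights:
  assumes "finite K" "0 < e"
  shows "\<exists>Z t. finite Z \<and> Z \<noteq> {} \<and> (\<forall>z\<in>Z. 0 \<le> t z) \<and> sum t Z = 1 \<and>
    (\<forall>l\<in>unit_cube. (\<Sum>z\<in>Z. t z * defect K act z l) \<le> e)"
proof -
  have "open {l. defect K act z l < e}" for z
    using continuous_on_defect by (rule open_Collect_less[OF _ continuous_on_const])
  moreover have "unit_cube \<subseteq> (\<Union>z\<in>UNIV. {l. defect K act z l < e})"
    using defect_small_somewhere[OF assms] by blast
  ultimately obtain Z where Z: "finite Z" "unit_cube \<subseteq> (\<Union>z\<in>Z. {l. defect K act z l < e})"
    by (rule compactE_image[OF compact_unit_cube])
  have "Z \<noteq> {}" using Z(2) unfolding unit_cube_def by fastforce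
  moreover have "\<exists>z\<in>Z. defect K act z l \<le> e" if "l \<in> unit_cube" for l
    using Z(2) that by (blast intro: less_imp_le)
  ultimately have "\<exists>t. (\<forall>z\<in>Z. 0 \<le> t z) \<and> sum t Z = 1 \<and> (\<forall>l\<in>unit_cube. (\<Sum>z\<in>Z. t z * defect K act z l) \<le> e)"
    by (rule kneser_minimax[OF Z(1) _ mix_convex_unit_cube mix_affine_on_defect])
  then show ?thesis using Z(1) \<open>Z \<noteq> {}\<close> by blast
qed

lemma folner_set_exists_sum:
  assumes "finite K" "0 < e"
  shows "\<exists>F. finite F \<and> F \<noteq> {} \<and> (\<Sum>k\<in>K. real (card {x\<in>F. act k x \<notin> F})) \<le> e * real (card F)"
proof -
  obtain Z t where Z: "finite Z" "Z \<noteq> {}" and t: "\<forall>z\<in>Z. 0 \<le> t z" "sum t Z = 1"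
    and small: "\<forall>l\<in>unit_cube. (\<Sum>z\<in>Z. t z * defect K act z l) \<le> e"
    using defect_weights[OF assms] by blast
  define p where "p x = (if x \<in> Z then t x else 0)" for x
  have p_nonneg: "0 \<le> p x" and p_supp: "x \<notin> Z \<Longrightarrow> p x = 0" for x
    using t(1) unfolding p_def by auto
  have "sum p Z = 1" using t(2) unfolding p_def by simp
  have "(\<lambda>(k, x). of_bool (p (act k x) < p x)) \<in> unit_cube" unfolding unit_cube_def by auto
  then have "(\<Sum>z\<in>Z. p z * defect K act z (\<lambda>(k, x). of_bool (p (act k x) < p x))) \<le> e"
    using small unfolding p_def by simp
  moreover have "(\<Sum>z\<in>Z. p z * defect K act z (\<lambda>(k, x). of_bool (p (act k x) < p x)))
      = (\<Sum>k\<in>K. \<Sum>x\<in>Z. max 0 (p x - p (act k x)))"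
    by (rule weighted_defect_indicator[OF Z(1) inj_act p_nonneg p_supp])
  ultimately have "(\<Sum>k\<in>K. \<Sum>x\<in>Z. max 0 (p x - p (act k x))) \<le> e * sum p Z"
    using \<open>sum p Z = 1\<close> by simp
  moreover have "0 < sum p Z" using \<open>sum p Z = 1\<close> by simp
  ultimately obtain F where F: "F \<subseteq> Z" "F \<noteq> {}"
    "(\<Sum>k\<in>K. real (card {x\<in>F. act k x \<notin> F})) \<le> e * real (card F)"
    using namioka_trick[where p = p, OF Z(1) p_nonneg p_supp] by blast
  then show ?thesis using finite_subset[OF F(1) Z(1)] by auto
qed

lemma folner_set_exists:
  assumes "finite K" "0 < e"
  shows "\<exists>F. finite F \<and> F \<noteq> {} \<and> (\<forall>k\<in>K. real (card {x\<in>F. act k x \<notin> F}) \<le> e * real (card F))"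
proof -
  obtain F where F: "finite F" "F \<noteq> {}"
    and sum_le: "(\<Sum>k\<in>K. real (card {x\<in>F. act k x \<notin> F})) \<le> e * real (card F)"
    using folner_set_exists_sum[OF assms] by blast
  have "real (card {x\<in>F. act k x \<notin> F}) \<le> e * real (card F)" if "k \<in> K" for k
    using member_le_sum[OF that _ \<open>finite K\<close>, of "\<lambda>k. real (card {x\<in>F. act k x \<notin> F})"] sum_le
    by simp
  then show ?thesis using F by blast
qed

end

lemma card_Diff_image_eq:
  assumes "finite F" "inj_on f F"
  shows "card (F - f ` F) = card {x\<in>F. f x \<notin> F}"
proof -
  have "card {x\<in>F. f x \<notin> F} = card (f ` {x\<in>F. f x \<notin> F})"
    using inj_on_subset[OF assms(2)] by (intro card_image[symmetric]) auto
  also have "f ` {x\<in>F. f x \<notin> F} = f ` F - F" by auto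
  also have "card (f ` F - F) = card (f ` F) - card (f ` F \<inter> F)"
    using assms(1) by (simp add: card_Diff_subset_Int)
  also have "\<dots> = card (F - f ` F)"
    using assms by (simp add: card_Diff_subset_Int card_image Int_commute)
  finally show ?thesis by simp
qed

lemma sofic_if_left_amenable:
  assumes "cancellative TYPE('a::monoid_mult)" "left_amenable TYPE('a)"
  shows "sofic TYPE('a)"
proof -
  have right_cancel: "\<And>s t t'::'a. t * s = t' * s \<Longrightarrow> t = t'"
    using assms(1) unfolding cancellative_def by blast
  interpret free_partial_action "\<lambda>a x y. y = a * (x::'a)"
  proof
    fix a b x y :: 'a
    show "y = a * x \<Longrightarrow> y = b * x \<Longrightarrow> a = b" using right_cancel[where s = x] by simp
  qed (simp_all add: mult.assoc)
  obtain m :: "('a \<Rightarrow> real) \<Rightarrow> real" where m: "is_mean m" "\<And>s f. linf f \<Longrightarrow> m (\<lambda>x. f (s * x)) = m f"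
    using assms(2) unfolding left_amenable_def by blast
  have inj: "inj (\<lambda>x. k * x)" for k :: 'a
    using assms(1) unfolding cancellative_def inj_def by blast
  have stuck_eq: "stuck F k = {x\<in>F. k * x \<notin> F}" for F k unfolding stuck_def by simp
  show ?thesis
  proof (rule sofic_if_folner)
    fix K :: "'a set" and \<epsilon> :: real
    assume "finite K" "0 < \<epsilon>"
    have "\<exists>F. finite F \<and> F \<noteq> {} \<and> (\<forall>k\<in>K. real (card {x\<in>F. k * x \<notin> F}) \<le> \<epsilon> * real (card F))"
      by (rule folner_set_exists[where m = m and act = "(*)" and K = K and e = \<epsilon>])
        (use m inj \<open>finite K\<close> \<open>0 < \<epsilon>\<close> in auto)
    then show "\<exists>F. finite F \<and> F \<noteq> {} \<and> (\<forall>k\<in>K. real (card (stuck F k)) \<le> \<epsilon> * real (card F))"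
      by (simp only: stuck_eq)
  qed
qed

lemma sofic_if_right_amenable:
  assumes "cancellative TYPE('a::monoid_mult)" "right_amenable TYPE('a)"
  shows "sofic TYPE('a)"
proof -
  have left_cancel: "\<And>s t t'::'a. s * t = s * t' \<Longrightarrow> t = t'"
    and right_cancel: "\<And>s t t'::'a. t * s = t' * s \<Longrightarrow> t = t'"
    using assms(1) unfolding cancellative_def by blast+
  interpret free_partial_action "\<lambda>a x y. y * a = (x::'a)"
  proof
    fix a b x y y' z :: 'a
    show "y * a = x \<Longrightarrow> y' * a = x \<Longrightarrow> y = y'" using right_cancel[where s = a] by simp
    show "y * b = x \<Longrightarrow> z * a = y \<Longrightarrow> z * (a * b) = x" by (simp add: mult.assoc[symmetric])
    show "y * b = x \<Longrightarrow> z * (a * b) = x \<Longrightarrow> z * a = y"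
      using right_cancel[where s = b and t = "z * a" and t' = y] by (simp add: mult.assoc)
    show "x * 1 = x" by simp
    show "y * a = x \<Longrightarrow> y * b = x \<Longrightarrow> a = b" using left_cancel[where s = y] by simp
  qed
  obtain m :: "('a \<Rightarrow> real) \<Rightarrow> real" where m: "is_mean m" "\<And>s f. linf f \<Longrightarrow> m (\<lambda>x. f (x * s)) = m f"
    using assms(2) unfolding right_amenable_def by blast
  have inj: "inj (\<lambda>x. x * k)" for k :: 'a
    using right_cancel unfolding inj_def by blast
  have card_stuck: "card (stuck F k) = card {x\<in>F. x * k \<notin> F}" if "finite F" for F k
  proof -
    have "stuck F k = F - (\<lambda>x. x * k) ` F" unfolding stuck_def by auto
    then show ?thesis using card_Diff_image_eq[OF that inj_on_subset[OF inj]] by simp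
  qed
  show ?thesis
  proof (rule sofic_if_folner)
    fix K :: "'a set" and \<epsilon> :: real
    assume "finite K" "0 < \<epsilon>"
    have "\<exists>F. finite F \<and> F \<noteq> {} \<and> (\<forall>k\<in>K. real (card {x\<in>F. x * k \<notin> F}) \<le> \<epsilon> * real (card F))"
      by (rule folner_set_exists[where m = m and act = "\<lambda>k x. x * k" and K = K and e = \<epsilon>])
        (use m inj \<open>finite K\<close> \<open>0 < \<epsilon>\<close> in auto)
    then show "\<exists>F. finite F \<and> F \<noteq> {} \<and> (\<forall>k\<in>K. real (card (stuck F k)) \<le> \<epsilon> * real (card F))"
      using card_stuck by auto
  qed
qed

theorem proposition4p7:
  assumes "cancellative TYPE('a::monoid_mult)"
    and "left_amenable TYPE('a) \<or> right_amenable TYPE('a)"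
  shows "sofic TYPE('a)"
  using assms sofic_if_left_amenable sofic_if_right_amenable by blast

end
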